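(* Let $G$ be a graph (loops and multiple edges allowed) of girth $g$. If two closed geodesics of length $g$ in $G$ share a subwalk of length $\lfloor g/2 \rfloor+1$, then they coincide.
   Context: A walk is a finite sequence of oriented edges in which the initial vertex of each edge after the first equals the terminal vertex of the previous one; it is closed if it starts and ends at the same vertex, and closed walks are considered up to cyclic permutation. A walk is geodesic if it never traverses an edge and immediately retraverses it in the opposite direction; a closed geodesic is a closed walk that is locally geodesic (including at the base point). The girth of $G$ is the smallest length of a closed geodesic in $G$. *)

theory Defs
  imports Main
begin

text \<open>A graph with loops and multiple edges is given by a set D of oriented edges
(darts), a map src giving the initial vertex of each dart, and a fixed-point-free
involution opp on D giving the reversed orientation. A loop is a dart e with src e = src (opp e).\<close>

definition graph :: "'d set \<Rightarrow> ('d \<Rightarrow> 'v) \<Rightarrow> ('d \<Rightarrow> 'd) \<Rightarrow> bool" where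
  "graph D src opp \<longleftrightarrow> (\<forall>e\<in>D. opp e \<in> D \<and> opp (opp e) = e \<and> opp e \<noteq> e)"

definition tgt :: "('d \<Rightarrow> 'v) \<Rightarrow> ('d \<Rightarrow> 'd) \<Rightarrow> 'd \<Rightarrow> 'v" where
  "tgt src opp e = src (opp e)"

definition walk :: "'d set \<Rightarrow> ('d \<Rightarrow> 'v) \<Rightarrow> ('d \<Rightarrow> 'd) \<Rightarrow> 'd list \<Rightarrow> bool" where
  "walk D src opp w \<longleftrightarrow> set w \<subseteq> D \<and>
     (\<forall>i. Suc i < length w \<longrightarrow> src (w ! Suc i) = tgt src opp (w ! i))"

text \<open>A closed walk (nonempty, ending where it starts), represented by a list;
closed walks are identified up to cyclic rotation of the list.\<close>
definition closed_walk :: "'d set \<Rightarrow> ('d \<Rightarrow> 'v) \<Rightarrow> ('d \<Rightarrow> 'd) \<Rightarrow> 'd list \<Rightarrow> bool" where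
  "closed_walk D src opp w \<longleftrightarrow> walk D src opp w \<and> w \<noteq> [] \<and>
     src (hd w) = tgt src opp (last w)"

definition closed_geodesic :: "'d set \<Rightarrow> ('d \<Rightarrow> 'v) \<Rightarrow> ('d \<Rightarrow> 'd) \<Rightarrow> 'd list \<Rightarrow> bool" where
  "closed_geodesic D src opp w \<longleftrightarrow> closed_walk D src opp w \<and>
     (\<forall>i < length w. w ! (Suc i mod length w) \<noteq> opp (w ! i))"

definition girth :: "'d set \<Rightarrow> ('d \<Rightarrow> 'v) \<Rightarrow> ('d \<Rightarrow> 'd) \<Rightarrow> nat" where
  "girth D src opp = (LEAST n. \<exists>w. closed_geodesic D src opp w \<and> length w = n)"

definition cyclic_subwalk :: "'d list \<Rightarrow> nat \<Rightarrow> 'd list \<Rightarrow> bool" where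
  "cyclic_subwalk s L c \<longleftrightarrow> L \<le> length c \<and> length s = L \<and> (\<exists>i. s = take L (rotate i c))"

definition same_closed_walk :: "'d list \<Rightarrow> 'd list \<Rightarrow> bool" where
  "same_closed_walk c1 c2 \<longleftrightarrow> (\<exists>k. c2 = rotate k c1)"

end

theory Submission
  imports Defs
begin

(* Unroll both closed geodesics, starting at the shared subwalk, into g-periodic
   non-backtracking sequences A and B. They agree on the first floor(g/2) + 1 positions and,
   by periodicity, at position g. If they disagreed somewhere in between, let i <= j be the
   first and the last disagreement: A_i ... A_j followed by B_j ... B_i traversed backwards is
   a closed geodesic of length 2(j - i + 1) <= 2(g - floor(g/2) - 1) < g, contradicting the
   girth. *)

definition geodesic_step :: "('d \<Rightarrow> 'v) \<Rightarrow> ('d \<Rightarrow> 'd) \<Rightarrow> 'd \<Rightarrow> 'd \<Rightarrow> bool" where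
  "geodesic_step src opp e f \<longleftrightarrow> src f = tgt src opp e \<and> f \<noteq> opp e"

definition geodesic_walk :: "'d set \<Rightarrow> ('d \<Rightarrow> 'v) \<Rightarrow> ('d \<Rightarrow> 'd) \<Rightarrow> 'd list \<Rightarrow> bool" where
  "geodesic_walk D src opp w \<longleftrightarrow> set w \<subseteq> D \<and> successively (geodesic_step src opp) w"

definition geodesic_ray :: "'d set \<Rightarrow> ('d \<Rightarrow> 'v) \<Rightarrow> ('d \<Rightarrow> 'd) \<Rightarrow> (nat \<Rightarrow> 'd) \<Rightarrow> bool" where
  "geodesic_ray D src opp A \<longleftrightarrow> (\<forall>k. A k \<in> D \<and> geodesic_step src opp (A k) (A (Suc k)))"

definition rev_walk :: "('d \<Rightarrow> 'd) \<Rightarrow> 'd list \<Rightarrow> 'd list" where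
  "rev_walk opp w = rev (map opp w)"

lemma closed_geodesic_iff_cyclic_steps:
  "closed_geodesic D src opp c \<longleftrightarrow> c \<noteq> [] \<and> set c \<subseteq> D \<and>
     (\<forall>i < length c. geodesic_step src opp (c ! i) (c ! (Suc i mod length c)))"
proof (cases "c = []")
  case False
  let ?n = "length c"
  have "(\<forall>i < ?n. src (c ! (Suc i mod ?n)) = tgt src opp (c ! i)) \<longleftrightarrow>
        (\<forall>i. Suc i < ?n \<longrightarrow> src (c ! Suc i) = tgt src opp (c ! i)) \<and>
        src (hd c) = tgt src opp (last c)"
  proof
    assume steps: "\<forall>i < ?n. src (c ! (Suc i mod ?n)) = tgt src opp (c ! i)"
    have "src (c ! Suc i) = tgt src opp (c ! i)" if "Suc i < ?n" for i
      using steps[rule_format, of i] that by simp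
    moreover have "src (hd c) = tgt src opp (last c)"
      using steps[rule_format, of "?n - 1"] False by (simp add: hd_conv_nth last_conv_nth)
    ultimately show "(\<forall>i. Suc i < ?n \<longrightarrow> src (c ! Suc i) = tgt src opp (c ! i)) \<and>
        src (hd c) = tgt src opp (last c)" by blast
  next
    assume steps: "(\<forall>i. Suc i < ?n \<longrightarrow> src (c ! Suc i) = tgt src opp (c ! i)) \<and>
        src (hd c) = tgt src opp (last c)"
    show "\<forall>i < ?n. src (c ! (Suc i mod ?n)) = tgt src opp (c ! i)"
    proof (intro allI impI)
      fix i assume "i < ?n"
      then consider "Suc i < ?n" | "i = ?n - 1" "Suc i = ?n" by linarith
      then show "src (c ! (Suc i mod ?n)) = tgt src opp (c ! i)"
        by cases (use steps False in \<open>simp_all add: hd_conv_nth last_conv_nth\<close>)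
    qed
  qed
  then show ?thesis
    using False unfolding closed_geodesic_def closed_walk_def walk_def geodesic_step_def by auto
qed (simp add: closed_geodesic_def closed_walk_def)

lemma closed_geodesic_unroll:
  assumes "closed_geodesic D src opp c"
  shows "geodesic_ray D src opp (\<lambda>k. c ! ((i + k) mod length c))"
  unfolding geodesic_ray_def
proof
  fix k
  let ?n = "length c"
  have "c \<noteq> []" and "set c \<subseteq> D"
    and steps: "\<forall>i < ?n. geodesic_step src opp (c ! i) (c ! (Suc i mod ?n))"
    using assms by (simp_all add: closed_geodesic_iff_cyclic_steps)
  moreover have "(i + Suc k) mod ?n = Suc ((i + k) mod ?n) mod ?n"
    by (simp add: mod_Suc_eq)
  ultimately show "c ! ((i + k) mod ?n) \<in> D \<and>
      geodesic_step src opp (c ! ((i + k) mod ?n)) (c ! ((i + Suc k) mod ?n))"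
    by auto
qed

lemma closed_geodesicI:
  assumes "c \<noteq> []" and "geodesic_walk D src opp (c @ [hd c])"
  shows "closed_geodesic D src opp c"
proof -
  have wrap: "(c @ [hd c]) ! Suc i = c ! (Suc i mod length c)" if "i < length c" for i
  proof -
    from that consider "Suc i < length c" | "Suc i = length c" by linarith
    then show ?thesis
      by cases (use assms(1) in \<open>simp_all add: nth_append hd_conv_nth\<close>)
  qed
  have walk: "successively (geodesic_step src opp) (c @ [hd c])"
    using assms(2) by (simp add: geodesic_walk_def)
  have "geodesic_step src opp (c ! i) (c ! (Suc i mod length c))" if "i < length c" for i
  proof -
    have "(c @ [hd c]) ! i = c ! i"
      using that by (simp add: nth_append)
    with successively_nth[OF walk, of i] wrap[OF that] that show ?thesis
      by simp
  qed
  then show ?thesis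
    using assms unfolding closed_geodesic_iff_cyclic_steps geodesic_walk_def by auto
qed

lemma geodesic_step_reverse:
  assumes "graph D src opp" and "e \<in> D" and "f \<in> D" and "geodesic_step src opp e f"
  shows "geodesic_step src opp (opp f) (opp e)"
  using assms unfolding graph_def geodesic_step_def tgt_def by auto

lemma geodesic_walk_rev_walk:
  assumes "graph D src opp" and "geodesic_walk D src opp w"
  shows "geodesic_walk D src opp (rev_walk opp w)"
proof -
  have "set (rev_walk opp w) \<subseteq> D"
    using assms unfolding graph_def geodesic_walk_def rev_walk_def by auto
  moreover have "successively (\<lambda>e f. geodesic_step src opp (opp f) (opp e)) w"
    using assms unfolding geodesic_walk_def
    by (auto intro: successively_mono geodesic_step_reverse)
  ultimately show ?thesis
    unfolding geodesic_walk_def rev_walk_def by (simp add: successively_map)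
qed

lemma closed_geodesic_append_rev_walk:
  assumes graph: "graph D src opp"
    and p: "geodesic_walk D src opp p" "p \<noteq> []"
    and q: "geodesic_walk D src opp q" "q \<noteq> []"
    and start: "src (hd p) = src (hd q)" "hd p \<noteq> hd q"
    and finish: "tgt src opp (last p) = tgt src opp (last q)" "last p \<noteq> last q"
  shows "closed_geodesic D src opp (p @ rev_walk opp q)"
proof (rule closed_geodesicI)
  let ?r = "rev_walk opp q"
  have opp_opp: "opp (opp e) = e" if "e \<in> D" for e
    using graph that unfolding graph_def by auto
  have in_D: "hd p \<in> D" "last p \<in> D" "hd q \<in> D" "last q \<in> D"
    using p q by (auto simp: geodesic_walk_def)
  have r: "?r \<noteq> []" "hd ?r = opp (last q)" "last ?r = opp (hd q)"
    using q(2) by (simp_all add: rev_walk_def hd_rev last_rev hd_map last_map)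
  have "opp (last q) \<noteq> opp (last p)"
    using finish(2) in_D opp_opp by metis
  then have turn: "geodesic_step src opp (last p) (hd ?r)"
    using r finish(1) by (simp add: geodesic_step_def tgt_def)
  have close: "geodesic_step src opp (last ?r) (hd p)"
    using r start in_D opp_opp by (simp add: geodesic_step_def tgt_def)
  have "successively (geodesic_step src opp) (p @ ?r @ [hd p])"
    using p q(2) r turn close geodesic_walk_rev_walk[OF graph q(1)]
    by (simp add: geodesic_walk_def successively_append_iff)
  moreover have "set (p @ ?r @ [hd p]) \<subseteq> D"
    using p geodesic_walk_rev_walk[OF graph q(1)] in_D by (simp add: geodesic_walk_def)
  ultimately show "geodesic_walk D src opp ((p @ ?r) @ [hd (p @ ?r)])"
    using p(2) by (simp add: geodesic_walk_def)
qed (use p in simp)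

lemma geodesic_walk_ray_segment:
  assumes "geodesic_ray D src opp A"
  shows "geodesic_walk D src opp (map A [i..<j])"
  using assms unfolding geodesic_walk_def geodesic_ray_def successively_conv_nth
  by (auto simp: nth_map_upt)

lemma girth_le_length:
  assumes "closed_geodesic D src opp w"
  shows "girth D src opp \<le> length w"
  using assms unfolding girth_def by (auto intro: Least_le)

lemma first_and_last_failure:
  fixes P :: "nat \<Rightarrow> bool"
  assumes "P m" and "P n" and "m \<le> k" and "k \<le> n" and "\<not> P k"
  obtains i j where "m < i" "i \<le> j" "j < n" "P (i - 1)" "\<not> P i" "\<not> P j" "P (Suc j)"
proof
  define S where "S = {k. m \<le> k \<and> k \<le> n \<and> \<not> P k}"
  have S: "finite S" "k \<in> S"
    using assms unfolding S_def by auto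
  then have "Min S \<in> S" "Max S \<in> S"
    using Min_in Max_in by blast+
  with assms(1,2) show m_less: "m < Min S" and less_n: "Max S < n"
    and "\<not> P (Min S)" "\<not> P (Max S)"
    unfolding S_def by (auto simp: le_less)
  show "Min S \<le> Max S"
    using S by (meson Max_ge Min_le order.trans)
  show "P (Min S - 1)"
  proof (rule ccontr)
    assume "\<not> P (Min S - 1)"
    with m_less less_n \<open>Min S \<le> Max S\<close> have "Min S - 1 \<in> S"
      unfolding S_def by auto
    with S m_less show False
      using Min_le[of S "Min S - 1"] by linarith
  qed
  show "P (Suc (Max S))"
  proof (rule ccontr)
    assume "\<not> P (Suc (Max S))"
    with less_n have "Suc (Max S) \<in> S"
      using \<open>Max S \<in> S\<close> unfolding S_def by auto
    with S show False
      using Max_ge[of S "Suc (Max S)"] by linarith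
  qed
qed

lemma geodesic_rays_agree_between:
  assumes graph: "graph D src opp"
    and rays: "geodesic_ray D src opp A" "geodesic_ray D src opp B"
    and ends: "A m = B m" "A n = B n"
    and short: "2 * (n - m - 1) < girth D src opp"
    and "m \<le> k" "k \<le> n"
  shows "A k = B k"
proof (rule ccontr)
  assume "A k \<noteq> B k"
  with ends \<open>m \<le> k\<close> \<open>k \<le> n\<close> obtain i j where ij: "m < i" "i \<le> j" "j < n"
    and agree: "A (i - 1) = B (i - 1)" "A (Suc j) = B (Suc j)"
    and differ: "A i \<noteq> B i" "A j \<noteq> B j"
    by (rule first_and_last_failure[where P = "\<lambda>k. A k = B k"])
  have step: "src (C (Suc l)) = tgt src opp (C l)" if "geodesic_ray D src opp C" for C l
    using that by (simp add: geodesic_ray_def geodesic_step_def)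
  have "src (A i) = src (B i)"
    using step[OF rays(1), of "i - 1"] step[OF rays(2), of "i - 1"] agree(1) ij(1) by simp
  moreover have "tgt src opp (A j) = tgt src opp (B j)"
    using step[OF rays(1), of j] step[OF rays(2), of j] agree(2) by simp
  moreover have segment_ends: "hd (map C [i..<Suc j]) = C i" "last (map C [i..<Suc j]) = C j"
    for C :: "nat \<Rightarrow> 'd"
    using ij(2) by (simp_all add: hd_map last_map del: upt_Suc)
  ultimately have "closed_geodesic D src opp (map A [i..<Suc j] @ rev_walk opp (map B [i..<Suc j]))"
    using ij(2) differ
    by (intro closed_geodesic_append_rev_walk graph geodesic_walk_ray_segment rays)
      (simp_all add: segment_ends del: upt_Suc)
  then have "girth D src opp \<le> length (map A [i..<Suc j] @ rev_walk opp (map B [i..<Suc j]))"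
    by (rule girth_le_length)
  also have "\<dots> = 2 * (Suc j - i)"
    using ij(2) by (simp add: rev_walk_def)
  finally have "girth D src opp \<le> 2 * (Suc j - i)" .
  with short ij show False
    by linarith
qed

lemma cyclic_subwalk_nth:
  assumes "cyclic_subwalk s L c"
  obtains i where "\<And>k. k < L \<Longrightarrow> s ! k = c ! ((i + k) mod length c)"
proof -
  from assms obtain i where "s = take L (rotate i c)" and "L \<le> length c"
    unfolding cyclic_subwalk_def by blast
  then have "s ! k = c ! ((i + k) mod length c)" if "k < L" for k
    using that by (simp add: nth_rotate)
  then show ?thesis
    using that by blast
qed

lemma same_closed_walkI:
  assumes "length c1 = length c2"
    and "\<And>k. k < length c1 \<Longrightarrow> c1 ! ((i + k) mod length c1) = c2 ! ((j + k) mod length c2)"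
  shows "same_closed_walk c1 c2"
proof -
  let ?n = "length c2"
  have "rotate i c1 = rotate j c2"
    using assms by (intro nth_equalityI) (simp_all add: nth_rotate)
  then have "rotate (?n - j mod ?n + i) c1 = rotate (?n - j mod ?n + j) c2"
    by (simp add: rotate_rotate [symmetric])
  also have "\<dots> = c2"
  proof (cases "c2 = []")
    case False
    then have "j mod ?n < ?n" "j mod ?n \<le> j"
      by simp_all
    then have "?n - j mod ?n + j = ?n * Suc (j div ?n)"
      by (simp add: minus_mod_eq_mult_div [symmetric])
    then show ?thesis by simp
  qed simp
  finally show ?thesis
    unfolding same_closed_walk_def by metis
qed

theorem lemma2p1:
  fixes D :: "'d set" and src :: "'d \<Rightarrow> 'v" and opp :: "'d \<Rightarrow> 'd"
    and c1 c2 s :: "'d list" and g :: nat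
  assumes "graph D src opp"
    and "g = girth D src opp"
    and "closed_geodesic D src opp c1" and "length c1 = g"
    and "closed_geodesic D src opp c2" and "length c2 = g"
    and "cyclic_subwalk s (g div 2 + 1) c1"
    and "cyclic_subwalk s (g div 2 + 1) c2"
  shows "same_closed_walk c1 c2"
proof -
  have "0 < g"
    using assms(3,4) by (auto simp: closed_geodesic_def closed_walk_def)
  obtain i1 where s1: "\<And>k. k < g div 2 + 1 \<Longrightarrow> s ! k = c1 ! ((i1 + k) mod g)"
    using cyclic_subwalk_nth[OF assms(7)] unfolding assms(4) by blast
  obtain i2 where s2: "\<And>k. k < g div 2 + 1 \<Longrightarrow> s ! k = c2 ! ((i2 + k) mod g)"
    using cyclic_subwalk_nth[OF assms(8)] unfolding assms(6) by blast
  define A where "A k = c1 ! ((i1 + k) mod g)" for k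
  define B where "B k = c2 ! ((i2 + k) mod g)" for k
  have rays: "geodesic_ray D src opp A" "geodesic_ray D src opp B"
    using closed_geodesic_unroll[OF assms(3), of i1] closed_geodesic_unroll[OF assms(5), of i2]
    unfolding A_def[abs_def] B_def[abs_def] assms(4,6) .
  have prefix: "A k = B k" if "k < g div 2 + 1" for k
    using s1 s2 that unfolding A_def B_def by simp
  have "A k = B k" if "k < g" for k
  proof (cases "k < g div 2 + 1")
    case False
    have "A g = B g"
      using prefix[of 0] unfolding A_def B_def by simp
    moreover have "2 * (g - g div 2 - 1) < g"
      using \<open>0 < g\<close> by presburger
    ultimately show ?thesis
      using geodesic_rays_agree_between[OF assms(1) rays prefix[of "g div 2"]] False that assms(2)
      by simp
  qed (rule prefix)
  then show ?thesis
    using assms(4,6) unfolding A_def B_def by (intro same_closed_walkI[of c1 c2 i1 i2]) simp_all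
qed

end
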